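(* Let $n,m\ge 1$, $T\in\mathbb Z_{\ge1}$, $1\le L_D\le T$, $\alpha\in(0,1)$, $\mu\ge 1$, $\bar B\ge0$, $\bar\epsilon\ge0$, and suppose the dwell time satisfies $T>-\ln\mu/\ln\alpha$. Set $\hat\alpha:=\alpha\,\mu^{1/T}$, so that $\hat\alpha\in[\alpha,1)$. For $i\in\mathbb Z_{\ge0}$ let $k_i:=iT$, $\mathcal T_i:=\{k_i,\dots,k_i+T-1\}$ and $\mathcal T_i^D:=\{k_{i+1}-L_D,\dots,k_{i+1}-1\}\subseteq\mathcal T_i$. Let $P_{\min},P_{\max}$ be symmetric positive definite $n\times n$ matrices, $p_{\min}:=\lambda_{\min}(P_{\min})$, $p_{\max}:=\lambda_{\max}(P_{\max})$, and let $(P_i)_{i\ge0}$ be symmetric positive definite matrices with $P_{\min}\preceq P_i\preceq P_{\max}$ and $P_{i+1}\preceq\mu P_i$ for all $i$. Let $\eta(k)\in\mathbb R^n$, $k\in\mathbb Z_{\ge0}$, be a sequence satisfying $$\eta(k+1)=g(k)+B(k)\,\epsilon(k),\qquad k\ge0,$$ where $g(k)\in\mathbb R^n$, $B(k)\in\mathbb R^{n\times m}$ with $\|B(k)\|\le\bar B$, $\epsilon(k)\in\mathbb R^m$ with $\epsilon(k)=0$ for $k\in\mathcal T_i\setminus\mathcal T_i^D$ and $\|\epsilon(k)\|\le\bar\epsilon$ for $k\in\mathcal T_i^D$, and for every $i$ and every $k\in\mathcal T_i$ the one-step decay $$\big\|P_i^{1/2}g(k)\big\|\le\sqrt{\alpha}\,\big\|P_i^{1/2}\eta(k)\big\|$$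 holds. (In the paper's setting, $g(k)=(A(k)+B(k)K_i)\eta(k)+d(k)$ is the closed-loop deviation update under the feedback $\xi=K_i\eta$ and the decay is the robust Lyapunov decrease certified on segment $i$.) Then for all $k\in\mathbb Z_{\ge0}$, $$\|\eta(k)\|\le\sqrt{\tfrac{p_{\max}}{p_{\min}}}\;\hat\alpha^{k/2}\,\|\eta(0)\|+\sqrt{\tfrac{p_{\max}}{p_{\min}}}\;\frac{(\hat\alpha/\alpha)^{T/2}}{1-\sqrt{\hat\alpha}}\;\bar B\,\bar\epsilon .$$
   Context: $\|\cdot\|$ is the Euclidean norm on vectors and the induced spectral norm on matrices; $P^{1/2}$ is the symmetric positive definite square root; $\preceq$ is the Loewner order; $\lambda_{\min},\lambda_{\max}$ denote extremal eigenvalues. *)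

theory Defs
  imports "HOL-Analysis.Analysis"
begin

definition sym_mat :: "real^'n^'n \<Rightarrow> bool" where
  "sym_mat P \<longleftrightarrow> transpose P = P"

definition pos_def :: "real^'n^'n \<Rightarrow> bool" where
  "pos_def P \<longleftrightarrow> sym_mat P \<and> (\<forall>x. x \<noteq> 0 \<longrightarrow> x \<bullet> (P *v x) > 0)"

definition loewner_le :: "real^'n^'n \<Rightarrow> real^'n^'n \<Rightarrow> bool" where
  "loewner_le A B \<longleftrightarrow> (\<forall>x. x \<bullet> ((B - A) *v x) \<ge> 0)"

definition mat_sqrt :: "real^'n^'n \<Rightarrow> real^'n^'n" where
  "mat_sqrt P = (THE S. pos_def S \<and> S ** S = P)"

definition eigenvalues :: "real^'n^'n \<Rightarrow> real set" where
  "eigenvalues A = {c. \<exists>v. v \<noteq> 0 \<and> A *v v = c *\<^sub>R v}"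

definition lambda_min :: "real^'n^'n \<Rightarrow> real" where
  "lambda_min A = Inf (eigenvalues A)"

definition lambda_max :: "real^'n^'n \<Rightarrow> real" where
  "lambda_max A = Sup (eigenvalues A)"

definition spec_norm :: "real^'m^'n \<Rightarrow> real" where
  "spec_norm B = onorm (\<lambda>x. B *v x)"

end

theory Submission
  imports Defs
begin

text \<open>On segment \<open>i\<close> the weighted norm \<open>V\<^sub>i x = norm (P\<^sub>i\<^sup>1\<^sup>/\<^sup>2 x)\<close> contracts by
  \<open>sqrt \<alpha>\<close> per step up to the disturbance term \<open>sqrt p\<^sub>m\<^sub>a\<^sub>x Bbar epsbar\<close>, and at a switch it grows
  by at most \<open>sqrt \<mu>\<close> because \<open>P\<^sub>i\<^sub>+\<^sub>1 \<preceq> \<mu> P\<^sub>i\<close>. Weighting \<open>V\<close> by \<open>\<rho> ^ (k mod T)\<close> with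
  \<open>\<rho> = sqrt (\<alpha>hat / \<alpha>)\<close>, so that \<open>\<rho> ^ T = sqrt \<mu>\<close>, spreads each jump over the preceding
  segment: the weighted value obeys \<open>u (k + 1) \<le> sqrt \<alpha>hat * u k + \<rho> ^ T sqrt p\<^sub>m\<^sub>a\<^sub>x Bbar epsbar\<close>,
  a contraction since the dwell-time condition gives \<open>\<alpha>hat < 1\<close>. Comparing \<open>V\<close> with the
  Euclidean norm through \<open>p\<^sub>m\<^sub>i\<^sub>n |x|\<^sup>2 \<le> x \<bullet> P\<^sub>i x \<le> p\<^sub>m\<^sub>a\<^sub>x |x|\<^sup>2\<close> gives the bound.
  Square roots and these eigenvalue bounds come from the spectral theorem, obtained by
  maximising the Rayleigh quotient on invariant subspaces.\<close>

section \<open>Spectral theorem for symmetric matrices\<close>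

lemma sym_mat_inner_commute:
  fixes P :: "real^'n^'n"
  assumes "sym_mat P"
  shows "x \<bullet> (P *v y) = (P *v x) \<bullet> y"
  using assms unfolding sym_mat_def by (metis dot_lmul_matrix vector_transpose_matrix)

lemma pos_def_imp_sym_mat: "pos_def P \<Longrightarrow> sym_mat P"
  by (simp add: pos_def_def)

lemma quadratic_nonneg_imp_linear_coeff_zero:
  fixes a c :: real
  assumes nonneg: "\<And>t. 0 \<le> 2 * t * a + t\<^sup>2 * c"
  shows "a = 0"
proof (rule ccontr)
  assume "a \<noteq> 0"
  define d where "d = \<bar>c\<bar> + 1"
  define t where "t = - a / d"
  have "d > 0" by (simp add: d_def)
  then have a: "a = - t * d" and "t \<noteq> 0" using \<open>a \<noteq> 0\<close> by (simp_all add: t_def)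
  have "0 \<le> 2 * t * a + t\<^sup>2 * c" by (rule nonneg)
  also have "\<dots> \<le> 2 * t * a + t\<^sup>2 * \<bar>c\<bar>" by (simp add: mult_left_mono)
  also have "\<dots> = - t\<^sup>2 * (\<bar>c\<bar> + 2)" by (simp add: a d_def power2_eq_square algebra_simps)
  also have "\<dots> < 0" using \<open>t \<noteq> 0\<close> by (simp add: add_pos_nonneg)
  finally show False by simp
qed

lemma rayleigh_quotient_max_attained:
  fixes P :: "real^'n^'n"
  assumes U: "subspace U" and nontrivial: "U \<noteq> {0}"
  obtains v where "v \<in> U" "norm v = 1"
    "\<And>x. x \<in> U \<Longrightarrow> x \<bullet> (P *v x) \<le> (v \<bullet> (P *v v)) * (x \<bullet> x)"
proof -
  define K where "K = sphere 0 1 \<inter> U"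
  have K: "compact K" unfolding K_def by (intro compact_Int_closed compact_sphere closed_subspace U)
  obtain u where "u \<in> U" "u \<noteq> 0" using nontrivial U subspace_0 by blast
  then have "u /\<^sub>R norm u \<in> K" using U by (auto simp: K_def subspace_scale)
  then have "K \<noteq> {}" by blast
  moreover have "continuous_on K (\<lambda>x. x \<bullet> (P *v x))" by (intro continuous_intros)
  ultimately obtain v where v: "v \<in> K" and max: "\<And>y. y \<in> K \<Longrightarrow> y \<bullet> (P *v y) \<le> v \<bullet> (P *v v)"
    using continuous_attains_sup[OF K] by metis
  have "x \<bullet> (P *v x) \<le> (v \<bullet> (P *v v)) * (x \<bullet> x)" if "x \<in> U" for x
  proof (cases "x = 0")
    case False
    then have "x /\<^sub>R norm x \<in> K" using that U by (auto simp: K_def subspace_scale)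
    then have "(x /\<^sub>R norm x) \<bullet> (P *v (x /\<^sub>R norm x)) \<le> v \<bullet> (P *v v)" by (rule max)
    then have "(x \<bullet> (P *v x)) / (norm x)\<^sup>2 \<le> v \<bullet> (P *v v)"
      by (simp add: matrix_vector_mult_scaleR power2_eq_square divide_inverse mult_ac)
    then show ?thesis using False by (simp add: divide_le_eq power2_norm_eq_inner)
  qed simp
  with v show thesis using that by (auto simp: K_def)
qed

text \<open>With \<open>M = v \<bullet> (P *v v)\<close>, the maximiser \<open>v\<close> minimises the nonnegative form
  \<open>M (x \<bullet> x) - x \<bullet> (P *v x)\<close> on \<open>U\<close>, so the first variation of that form at \<open>v\<close> in the
  direction \<open>w = M v - P v\<close>, which is \<open>2 (w \<bullet> w)\<close>, vanishes.\<close>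

lemma rayleigh_maximizer_is_eigenvector:
  fixes P :: "real^'n^'n"
  assumes sym: "sym_mat P" and U: "subspace U" and invariant: "\<And>x. x \<in> U \<Longrightarrow> P *v x \<in> U"
    and v: "v \<in> U" "norm v = 1"
    and max: "\<And>x. x \<in> U \<Longrightarrow> x \<bullet> (P *v x) \<le> (v \<bullet> (P *v v)) * (x \<bullet> x)"
  shows "P *v v = (v \<bullet> (P *v v)) *\<^sub>R v"
proof -
  define M where "M = v \<bullet> (P *v v)"
  define w where "w = M *\<^sub>R v - P *v v"
  have "w \<in> U" unfolding w_def using v invariant U by (simp add: subspace_diff subspace_scale)
  have "0 \<le> 2 * t * (w \<bullet> w) + t\<^sup>2 * (M * (w \<bullet> w) - w \<bullet> (P *v w))" for t
  proof -
    have "v + t *\<^sub>R w \<in> U" using v \<open>w \<in> U\<close> U by (simp add: subspace_add subspace_scale)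
    then have "0 \<le> M * ((v + t *\<^sub>R w) \<bullet> (v + t *\<^sub>R w)) - (v + t *\<^sub>R w) \<bullet> (P *v (v + t *\<^sub>R w))"
      using max by (simp add: M_def)
    also have "\<dots> = 2 * t * (w \<bullet> w) + t\<^sup>2 * (M * (w \<bullet> w) - w \<bullet> (P *v w))"
    proof -
      have "M * (w \<bullet> v) - w \<bullet> (P *v v) = w \<bullet> w"
        by (simp add: w_def inner_diff_right)
      moreover have "v \<bullet> (P *v w) = w \<bullet> (P *v v)"
        using sym_mat_inner_commute[OF sym, of v w] by (simp add: inner_commute)
      moreover have "v \<bullet> v = 1" using v(2) by (simp add: norm_eq_1)
      ultimately have "t * (2 * (M * (w \<bullet> v))) = t * (2 * (w \<bullet> w + w \<bullet> (P *v v)))"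
        by simp
      with \<open>v \<bullet> (P *v w) = w \<bullet> (P *v v)\<close> \<open>v \<bullet> v = 1\<close> show ?thesis
        by (simp add: M_def algebra_simps inner_commute[of v w] power2_eq_square)
    qed
    finally show ?thesis .
  qed
  then have "w \<bullet> w = 0" by (rule quadratic_nonneg_imp_linear_coeff_zero)
  then show ?thesis by (simp add: w_def M_def)
qed

definition orthonormal_eigenbasis :: "real^'n^'n \<Rightarrow> (real^'n) set \<Rightarrow> (real^'n) set \<Rightarrow> bool" where
  "orthonormal_eigenbasis P U B \<longleftrightarrow> B \<subseteq> U \<and> finite B \<and> pairwise orthogonal B \<and> span B = U \<and>
     (\<forall>b\<in>B. norm b = 1 \<and> P *v b = (b \<bullet> (P *v b)) *\<^sub>R b)"

lemma orthogonal_complement_in_subspace: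
  fixes v :: "'a::euclidean_space"
  assumes U: "subspace U" and v: "v \<in> U" "norm v = 1"
  shows "subspace {x\<in>U. v \<bullet> x = 0}" and "span (insert v {x\<in>U. v \<bullet> x = 0}) = U"
    and "dim U = Suc (dim {x\<in>U. v \<bullet> x = 0})"
proof -
  let ?V = "{x\<in>U. v \<bullet> x = 0}"
  show V: "subspace ?V" using U unfolding subspace_def by (auto simp: inner_add_right)
  have vv: "v \<bullet> v = 1" using v(2) by (simp add: norm_eq_1)
  show span: "span (insert v ?V) = U"
  proof
    show "span (insert v ?V) \<subseteq> U" using v(1) U by (intro span_minimal) auto
    show "U \<subseteq> span (insert v ?V)"
    proof
      fix x assume "x \<in> U"
      then have "x - (v \<bullet> x) *\<^sub>R v \<in> ?V"
        using v U vv by (simp add: subspace_diff subspace_scale inner_diff_right)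
      then show "x \<in> span (insert v ?V)" unfolding span_insert by (blast intro: span_base)
    qed
  qed
  have "v \<notin> span ?V" unfolding span_eq_iff[THEN iffD2, OF V] using vv by simp
  then show "dim U = Suc (dim ?V)" using dim_insert[of v ?V] span by (metis Suc_eq_plus1 dim_span)
qed

lemma orthonormal_eigenbasis_exists_on:
  fixes P :: "real^'n^'n"
  assumes sym: "sym_mat P"
  shows "subspace U \<Longrightarrow> (\<And>x. x \<in> U \<Longrightarrow> P *v x \<in> U) \<Longrightarrow> \<exists>B. orthonormal_eigenbasis P U B"
proof (induction "dim U" arbitrary: U)
  case 0
  then have "U \<subseteq> {0}" using dim_eq_0 by metis
  then have "U = {0}" using subspace_0[OF "0.prems"(1)] by blast
  then show ?case unfolding orthonormal_eigenbasis_def by (intro exI[of _ "{}"]) auto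
next
  case (Suc n U)
  then have "U \<noteq> {0}" by auto
  then obtain v where v: "v \<in> U" "norm v = 1"
    and max: "\<And>x. x \<in> U \<Longrightarrow> x \<bullet> (P *v x) \<le> (v \<bullet> (P *v v)) * (x \<bullet> x)"
    using rayleigh_quotient_max_attained[OF Suc.prems(1)] by blast
  have ev: "P *v v = (v \<bullet> (P *v v)) *\<^sub>R v"
    using rayleigh_maximizer_is_eigenvector[OF sym Suc.prems v max] .
  define V where "V = {x\<in>U. v \<bullet> x = 0}"
  note V = orthogonal_complement_in_subspace[OF Suc.prems(1) v, folded V_def]
  have "P *v x \<in> V" if "x \<in> V" for x
  proof -
    have "v \<bullet> (P *v x) = (v \<bullet> (P *v v)) * (v \<bullet> x)"
      by (metis ev inner_scaleR_left sym sym_mat_inner_commute)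
    with that Suc.prems(2) show ?thesis by (simp add: V_def)
  qed
  moreover have "n = dim V" using V(3) Suc.hyps(2) by simp
  ultimately obtain B where B: "orthonormal_eigenbasis P V B" using Suc.hyps(1) V(1) by blast
  have "span (insert v B) = span (insert v V)"
    using B unfolding orthonormal_eigenbasis_def span_insert by (auto simp: span_span)
  with B v ev V(2) have "orthonormal_eigenbasis P U (insert v B)"
    unfolding orthonormal_eigenbasis_def pairwise_insert
    by (auto simp: V_def orthogonal_def inner_commute)
  then show ?case by blast
qed

lemma orthonormal_eigenbasis_exists:
  fixes P :: "real^'n^'n"
  assumes "sym_mat P"
  obtains B where "orthonormal_eigenbasis P UNIV B"
  using orthonormal_eigenbasis_exists_on[OF assms, of UNIV] by auto

lemma orthonormal_eigenbasisD:
  assumes "orthonormal_eigenbasis P U B" "b \<in> B"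
  shows "norm b = 1" "P *v b = (b \<bullet> (P *v b)) *\<^sub>R b"
  using assms unfolding orthonormal_eigenbasis_def by blast+

lemma orthonormal_eigenbasis_inner:
  assumes "orthonormal_eigenbasis P U B" "b \<in> B" "b' \<in> B"
  shows "b \<bullet> b' = (if b = b' then 1 else 0)"
  using assms unfolding orthonormal_eigenbasis_def pairwise_def orthogonal_def
  by (auto simp: norm_eq_1)

lemma orthonormal_eigenbasis_sum_inner:
  assumes B: "orthonormal_eigenbasis P U B" and "b' \<in> B"
  shows "(\<Sum>b\<in>B. c b *\<^sub>R b) \<bullet> b' = c b'"
proof -
  have "(\<Sum>b\<in>B. c b *\<^sub>R b) \<bullet> b' = (\<Sum>b\<in>B. if b = b' then c b' else 0)"
    using orthonormal_eigenbasis_inner[OF B _ \<open>b' \<in> B\<close>] by (auto simp: inner_sum_left intro: sum.cong)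
  also have "\<dots> = c b'" using B \<open>b' \<in> B\<close> by (simp add: orthonormal_eigenbasis_def)
  finally show ?thesis .
qed

lemma orthonormal_eigenbasis_expansion:
  assumes B: "orthonormal_eigenbasis P UNIV B"
  shows "x = (\<Sum>b\<in>B. (b \<bullet> x) *\<^sub>R b)"
proof -
  define y where "y = x - (\<Sum>b\<in>B. (b \<bullet> x) *\<^sub>R b)"
  have "orthogonal y b" if "b \<in> B" for b
    using orthonormal_eigenbasis_sum_inner[OF B that, of "\<lambda>b. b \<bullet> x"]
    by (simp add: y_def orthogonal_def inner_diff_left inner_commute[of x b])
  moreover have "y \<in> span B" using B by (simp add: orthonormal_eigenbasis_def)
  ultimately have "orthogonal y y" by (blast intro: orthogonal_to_span)
  then show ?thesis by (simp add: y_def orthogonal_def)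
qed

lemma orthonormal_eigenbasis_inner_self:
  assumes B: "orthonormal_eigenbasis P UNIV B"
  shows "x \<bullet> x = (\<Sum>b\<in>B. (b \<bullet> x)\<^sup>2)"
  by (subst (1) orthonormal_eigenbasis_expansion[OF B])
    (simp add: inner_sum_left power2_eq_square)

lemma orthonormal_eigenbasis_bilinear:
  assumes B: "orthonormal_eigenbasis P UNIV B"
  shows "x \<bullet> (P *v y) = (\<Sum>b\<in>B. (b \<bullet> (P *v b)) * (b \<bullet> x) * (b \<bullet> y))"
proof -
  have "P *v y = (\<Sum>b\<in>B. (b \<bullet> y) *\<^sub>R (P *v b))"
    by (subst orthonormal_eigenbasis_expansion[OF B])
      (simp add: matrix_vector_mult_scaleR linear_sum[OF matrix_vector_mul_linear])
  also have "\<dots> = (\<Sum>b\<in>B. ((b \<bullet> (P *v b)) * (b \<bullet> y)) *\<^sub>R b)"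
    by (intro sum.cong refl) (subst orthonormal_eigenbasisD(2)[OF B], simp_all)
  finally show ?thesis by (simp add: inner_sum_right inner_commute mult_ac)
qed

lemma orthonormal_eigenbasis_rayleigh_bounds:
  assumes B: "orthonormal_eigenbasis P UNIV B"
  shows "(\<And>b. b \<in> B \<Longrightarrow> lo \<le> b \<bullet> (P *v b)) \<Longrightarrow> lo * (x \<bullet> x) \<le> x \<bullet> (P *v x)"
    and "(\<And>b. b \<in> B \<Longrightarrow> b \<bullet> (P *v b) \<le> hi) \<Longrightarrow> x \<bullet> (P *v x) \<le> hi * (x \<bullet> x)"
proof -
  have form: "x \<bullet> (P *v x) = (\<Sum>b\<in>B. (b \<bullet> (P *v b)) * (b \<bullet> x)\<^sup>2)"
    using orthonormal_eigenbasis_bilinear[OF B, of x x] by (simp add: power2_eq_square mult.assoc)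
  have "c * (x \<bullet> x) = (\<Sum>b\<in>B. c * (b \<bullet> x)\<^sup>2)" for c
    by (simp add: orthonormal_eigenbasis_inner_self[OF B] sum_distrib_left)
  then show "(\<And>b. b \<in> B \<Longrightarrow> lo \<le> b \<bullet> (P *v b)) \<Longrightarrow> lo * (x \<bullet> x) \<le> x \<bullet> (P *v x)"
    and "(\<And>b. b \<in> B \<Longrightarrow> b \<bullet> (P *v b) \<le> hi) \<Longrightarrow> x \<bullet> (P *v x) \<le> hi * (x \<bullet> x)"
    unfolding form by (auto intro!: sum_mono mult_right_mono)
qed

lemma orthonormal_eigenbasis_imp_sym_mat:
  assumes B: "orthonormal_eigenbasis P UNIV B"
  shows "sym_mat P"
proof -
  have "transpose P *v x = P *v x" for x
  proof (rule vector_eq_rdot[THEN iffD1], rule allI)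
    fix y
    have "(transpose P *v x) \<bullet> y = x \<bullet> (P *v y)" by (simp add: dot_lmul_matrix)
    also have "\<dots> = y \<bullet> (P *v x)"
      unfolding orthonormal_eigenbasis_bilinear[OF B, of x y] orthonormal_eigenbasis_bilinear[OF B, of y x]
      by (simp add: mult_ac)
    finally show "(transpose P *v x) \<bullet> y = (P *v x) \<bullet> y" by (simp add: inner_commute)
  qed
  then show ?thesis unfolding sym_mat_def by (simp add: matrix_eq)
qed

lemma orthonormal_eigenbasis_pos_def:
  fixes P :: "real^'n^'n"
  assumes B: "orthonormal_eigenbasis P UNIV B" and pos: "\<And>b. b \<in> B \<Longrightarrow> 0 < b \<bullet> (P *v b)"
  shows "pos_def P"
  unfolding pos_def_def
proof (intro conjI allI impI orthonormal_eigenbasis_imp_sym_mat[OF B])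
  fix x :: "real^'n"
  assume "x \<noteq> 0"
  have "\<exists>b\<in>B. b \<bullet> x \<noteq> 0"
  proof (rule ccontr)
    assume "\<not> (\<exists>b\<in>B. b \<bullet> x \<noteq> 0)"
    then have "(\<Sum>b\<in>B. (b \<bullet> x) *\<^sub>R b) = 0" by simp
    with orthonormal_eigenbasis_expansion[OF B, of x] \<open>x \<noteq> 0\<close> show False by simp
  qed
  then obtain b0 where "b0 \<in> B" "b0 \<bullet> x \<noteq> 0" by blast
  moreover have "finite B" using B by (simp add: orthonormal_eigenbasis_def)
  ultimately have "0 < (\<Sum>b\<in>B. (b \<bullet> (P *v b)) * (b \<bullet> x)\<^sup>2)"
    by (intro sum_pos2) (auto simp: pos less_imp_le)
  then show "0 < x \<bullet> (P *v x)"
    using orthonormal_eigenbasis_bilinear[OF B, of x x] by (simp add: power2_eq_square mult.assoc)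
qed

lemma orthonormal_eigenbasis_nonempty:
  assumes "orthonormal_eigenbasis P UNIV B"
  shows "B \<noteq> {}"
  using assms UNIV_not_singleton[of 0] by (auto simp: orthonormal_eigenbasis_def)

lemma pos_def_orthonormal_eigenbasis_pos:
  assumes "pos_def P" "orthonormal_eigenbasis P U B" "b \<in> B"
  shows "0 < b \<bullet> (P *v b)"
proof -
  have "b \<noteq> 0" using orthonormal_eigenbasisD(1)[OF assms(2,3)] by auto
  then show ?thesis using assms(1) unfolding pos_def_def by blast
qed

lemma matrix_eq_on_spanning_set:
  fixes A A' :: "real^'n^'m"
  assumes "span B = UNIV" and "\<And>b. b \<in> B \<Longrightarrow> A *v b = A' *v b"
  shows "A = A'"
proof (rule matrix_eq[THEN iffD2], rule allI)
  fix x :: "real^'n"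
  have "x \<in> span B" using assms(1) by simp
  then show "A *v x = A' *v x"
    using linear_eq_on_span[OF matrix_vector_mul_linear matrix_vector_mul_linear, of B A A'] assms(2)
    by blast
qed

lemma orthonormal_eigenbasis_prescribed_eigenvalues:
  fixes c :: "real^'n \<Rightarrow> real"
  assumes B: "orthonormal_eigenbasis P UNIV B"
  obtains S where "orthonormal_eigenbasis S UNIV B" and "\<And>b. b \<in> B \<Longrightarrow> S *v b = c b *\<^sub>R b"
proof -
  define f where "f x = (\<Sum>b\<in>B. (c b * (b \<bullet> x)) *\<^sub>R b)" for x
  have "linear f" unfolding f_def
    by (rule linearI) (simp_all add: inner_add_right distrib_left scaleR_add_left sum.distrib
        scaleR_sum_right mult.left_commute)
  then have Sx: "matrix f *v x = f x" for x
    by (simp add: matrix_works linear_matrix_vector_mul_eq)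
  have Sb: "matrix f *v b = c b *\<^sub>R b" if "b \<in> B" for b
  proof -
    have "matrix f *v b = (\<Sum>b'\<in>B. if b' = b then c b *\<^sub>R b else 0)"
      unfolding Sx f_def using orthonormal_eigenbasis_inner[OF B _ that] by (auto intro: sum.cong)
    also have "\<dots> = c b *\<^sub>R b" using B that by (simp add: orthonormal_eigenbasis_def)
    finally show ?thesis .
  qed
  have "b \<bullet> (matrix f *v b) = c b" if "b \<in> B" for b
    using Sb[OF that] orthonormal_eigenbasisD(1)[OF B that] by (simp add: norm_eq_1)
  with B Sb have "orthonormal_eigenbasis (matrix f) UNIV B"
    by (simp add: orthonormal_eigenbasis_def)
  then show thesis using Sb by (rule that)
qed

section \<open>Square roots and extremal eigenvalues\<close>

lemma pos_def_square_root_on_eigenvector: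
  fixes P S :: "real^'n^'n"
  assumes S: "pos_def S" "S ** S = P" and ev: "P *v b = l *\<^sub>R b" and l: "0 \<le> l"
  shows "S *v b = sqrt l *\<^sub>R b"
proof -
  define w where "w = S *v b - sqrt l *\<^sub>R b"
  have "S *v w + sqrt l *\<^sub>R w = S *v (S *v b) - (sqrt l * sqrt l) *\<^sub>R b"
    unfolding w_def by (simp add: algebra_simps)
  also have "\<dots> = 0" using S(2) ev l by (simp add: matrix_vector_mul_assoc)
  finally have "S *v w = - sqrt l *\<^sub>R w" by (simp add: eq_neg_iff_add_eq_0)
  then have "w \<bullet> (S *v w) \<le> 0" using l by simp
  then have "w = 0" using S(1) unfolding pos_def_def by (meson not_less)
  then show ?thesis by (simp add: w_def)
qed

lemma pos_def_square_root_exists: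
  fixes P :: "real^'n^'n"
  assumes P: "pos_def P"
  obtains S where "pos_def S" "S ** S = P"
proof -
  obtain B where B: "orthonormal_eigenbasis P UNIV B"
    using orthonormal_eigenbasis_exists[OF pos_def_imp_sym_mat[OF P]] by blast
  define l where "l b = b \<bullet> (P *v b)" for b
  have l: "0 < l b" if "b \<in> B" for b
    using pos_def_orthonormal_eigenbasis_pos[OF P B that] by (simp add: l_def)
  obtain S where SB: "orthonormal_eigenbasis S UNIV B"
    and Sb: "\<And>b. b \<in> B \<Longrightarrow> S *v b = sqrt (l b) *\<^sub>R b"
    using orthonormal_eigenbasis_prescribed_eigenvalues[OF B, where c = "\<lambda>b. sqrt (l b)"] by blast
  have "pos_def S"
  proof (rule orthonormal_eigenbasis_pos_def[OF SB])
    fix b assume "b \<in> B"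
    then show "0 < b \<bullet> (S *v b)"
      using Sb l orthonormal_eigenbasisD(1)[OF B] by (simp add: norm_eq_1)
  qed
  moreover have "S ** S = P"
  proof (rule matrix_eq_on_spanning_set)
    show "span B = UNIV" using B by (simp add: orthonormal_eigenbasis_def)
    fix b assume b: "b \<in> B"
    have "(S ** S) *v b = (sqrt (l b) * sqrt (l b)) *\<^sub>R b"
      using Sb[OF b] by (simp add: matrix_vector_mul_assoc[symmetric] matrix_vector_mult_scaleR)
    also have "\<dots> = l b *\<^sub>R b" using l[OF b] by simp
    also have "\<dots> = P *v b" unfolding l_def by (rule orthonormal_eigenbasisD(2)[OF B b, symmetric])
    finally show "(S ** S) *v b = P *v b" .
  qed
  ultimately show thesis by (rule that)
qed

lemma pos_def_square_root_unique:
  fixes P S S' :: "real^'n^'n"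
  assumes P: "pos_def P" and S: "pos_def S" "S ** S = P" and S': "pos_def S'" "S' ** S' = P"
  shows "S = S'"
proof -
  obtain B where B: "orthonormal_eigenbasis P UNIV B"
    using orthonormal_eigenbasis_exists[OF pos_def_imp_sym_mat[OF P]] by blast
  show ?thesis
  proof (rule matrix_eq_on_spanning_set)
    show "span B = UNIV" using B by (simp add: orthonormal_eigenbasis_def)
    fix b assume b: "b \<in> B"
    have "0 \<le> b \<bullet> (P *v b)" using pos_def_orthonormal_eigenbasis_pos[OF P B b] by simp
    then show "S *v b = S' *v b"
      using pos_def_square_root_on_eigenvector[OF S orthonormal_eigenbasisD(2)[OF B b]]
        pos_def_square_root_on_eigenvector[OF S' orthonormal_eigenbasisD(2)[OF B b]]
      by simp
  qed
qed

lemma mat_sqrt: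
  fixes P :: "real^'n^'n"
  assumes "pos_def P"
  shows "pos_def (mat_sqrt P)" and "mat_sqrt P ** mat_sqrt P = P"
proof -
  obtain S where S: "pos_def S" "S ** S = P" using pos_def_square_root_exists[OF assms] .
  have "mat_sqrt P = S"
    unfolding mat_sqrt_def
  proof (rule the_equality)
    show "pos_def S \<and> S ** S = P" using S by simp
    fix S' assume "pos_def S' \<and> S' ** S' = P"
    then show "S' = S" using pos_def_square_root_unique[OF assms _ _ S] by blast
  qed
  with S show "pos_def (mat_sqrt P)" and "mat_sqrt P ** mat_sqrt P = P" by simp_all
qed

lemma norm_mat_sqrt_mult_vec_squared:
  fixes P :: "real^'n^'n"
  assumes "pos_def P"
  shows "(norm (mat_sqrt P *v x))\<^sup>2 = x \<bullet> (P *v x)"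
proof -
  have "sym_mat (mat_sqrt P)" using mat_sqrt(1)[OF assms] by (rule pos_def_imp_sym_mat)
  then have "(mat_sqrt P *v x) \<bullet> (mat_sqrt P *v x) = x \<bullet> (mat_sqrt P *v (mat_sqrt P *v x))"
    using sym_mat_inner_commute[of "mat_sqrt P" x "mat_sqrt P *v x"] by simp
  also have "\<dots> = x \<bullet> (P *v x)" by (simp add: matrix_vector_mul_assoc mat_sqrt(2)[OF assms])
  finally show ?thesis by (simp add: power2_norm_eq_inner)
qed

lemma orthonormal_eigenbasis_in_eigenvalues:
  assumes "orthonormal_eigenbasis P U B" "b \<in> B"
  shows "b \<bullet> (P *v b) \<in> eigenvalues P"
proof -
  have "b \<noteq> 0" using orthonormal_eigenbasisD(1)[OF assms] by auto
  with orthonormal_eigenbasisD(2)[OF assms] show ?thesis unfolding eigenvalues_def by blast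
qed

lemma eigenvalue_rayleigh_quotient:
  assumes "c \<in> eigenvalues P"
  obtains v where "0 < v \<bullet> v" "v \<bullet> (P *v v) = c * (v \<bullet> v)"
proof -
  from assms obtain v where "v \<noteq> 0" "P *v v = c *\<^sub>R v" unfolding eigenvalues_def by blast
  then show thesis using that[of v] by simp
qed

lemma orthonormal_eigenbasis_lambda_min:
  fixes P :: "real^'n^'n"
  assumes B: "orthonormal_eigenbasis P UNIV B"
  shows "lambda_min P = Min ((\<lambda>b. b \<bullet> (P *v b)) ` B)"
  unfolding lambda_min_def
proof (rule cInf_eq_minimum)
  have fin: "finite B" using B by (simp add: orthonormal_eigenbasis_def)
  moreover have "(\<lambda>b. b \<bullet> (P *v b)) ` B \<noteq> {}" using orthonormal_eigenbasis_nonempty[OF B] by simp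
  ultimately have "Min ((\<lambda>b. b \<bullet> (P *v b)) ` B) \<in> (\<lambda>b. b \<bullet> (P *v b)) ` B"
    by (intro Min_in finite_imageI)
  then show "Min ((\<lambda>b. b \<bullet> (P *v b)) ` B) \<in> eigenvalues P"
    using orthonormal_eigenbasis_in_eigenvalues[OF B] by (auto simp del: Min_in)
  fix c assume "c \<in> eigenvalues P"
  then obtain v where v: "0 < v \<bullet> v" "v \<bullet> (P *v v) = c * (v \<bullet> v)" by (rule eigenvalue_rayleigh_quotient)
  have "Min ((\<lambda>b. b \<bullet> (P *v b)) ` B) * (v \<bullet> v) \<le> v \<bullet> (P *v v)"
    using fin by (intro orthonormal_eigenbasis_rayleigh_bounds(1)[OF B]) simp
  with v show "Min ((\<lambda>b. b \<bullet> (P *v b)) ` B) \<le> c" by (simp add: mult_le_cancel_right_pos)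
qed

lemma orthonormal_eigenbasis_lambda_max:
  fixes P :: "real^'n^'n"
  assumes B: "orthonormal_eigenbasis P UNIV B"
  shows "lambda_max P = Max ((\<lambda>b. b \<bullet> (P *v b)) ` B)"
  unfolding lambda_max_def
proof (rule cSup_eq_maximum)
  have fin: "finite B" using B by (simp add: orthonormal_eigenbasis_def)
  moreover have "(\<lambda>b. b \<bullet> (P *v b)) ` B \<noteq> {}" using orthonormal_eigenbasis_nonempty[OF B] by simp
  ultimately have "Max ((\<lambda>b. b \<bullet> (P *v b)) ` B) \<in> (\<lambda>b. b \<bullet> (P *v b)) ` B"
    by (intro Max_in finite_imageI)
  then show "Max ((\<lambda>b. b \<bullet> (P *v b)) ` B) \<in> eigenvalues P"
    using orthonormal_eigenbasis_in_eigenvalues[OF B] by (auto simp del: Max_in)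
  fix c assume "c \<in> eigenvalues P"
  then obtain v where v: "0 < v \<bullet> v" "v \<bullet> (P *v v) = c * (v \<bullet> v)" by (rule eigenvalue_rayleigh_quotient)
  have "v \<bullet> (P *v v) \<le> Max ((\<lambda>b. b \<bullet> (P *v b)) ` B) * (v \<bullet> v)"
    using fin by (intro orthonormal_eigenbasis_rayleigh_bounds(2)[OF B]) simp
  with v show "c \<le> Max ((\<lambda>b. b \<bullet> (P *v b)) ` B)" by (simp add: mult_le_cancel_right_pos)
qed

lemma sym_mat_lambda_min_le_rayleigh:
  fixes P :: "real^'n^'n"
  assumes "sym_mat P"
  shows "lambda_min P * (x \<bullet> x) \<le> x \<bullet> (P *v x)"
proof -
  obtain B where B: "orthonormal_eigenbasis P UNIV B" using orthonormal_eigenbasis_exists[OF assms] .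
  then have "finite B" by (simp add: orthonormal_eigenbasis_def)
  then show ?thesis
    unfolding orthonormal_eigenbasis_lambda_min[OF B]
    by (intro orthonormal_eigenbasis_rayleigh_bounds(1)[OF B]) simp
qed

lemma sym_mat_rayleigh_le_lambda_max:
  fixes P :: "real^'n^'n"
  assumes "sym_mat P"
  shows "x \<bullet> (P *v x) \<le> lambda_max P * (x \<bullet> x)"
proof -
  obtain B where B: "orthonormal_eigenbasis P UNIV B" using orthonormal_eigenbasis_exists[OF assms] .
  then have "finite B" by (simp add: orthonormal_eigenbasis_def)
  then show ?thesis
    unfolding orthonormal_eigenbasis_lambda_max[OF B]
    by (intro orthonormal_eigenbasis_rayleigh_bounds(2)[OF B]) simp
qed

lemma pos_def_lambda_pos:
  fixes P :: "real^'n^'n"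
  assumes P: "pos_def P"
  shows "0 < lambda_min P" and "0 < lambda_max P"
proof -
  obtain B where B: "orthonormal_eigenbasis P UNIV B"
    using orthonormal_eigenbasis_exists[OF pos_def_imp_sym_mat[OF P]] by blast
  have "finite B" using B by (simp add: orthonormal_eigenbasis_def)
  moreover note orthonormal_eigenbasis_nonempty[OF B] pos_def_orthonormal_eigenbasis_pos[OF P B]
  ultimately show "0 < lambda_min P" and "0 < lambda_max P"
    unfolding orthonormal_eigenbasis_lambda_min[OF B] orthonormal_eigenbasis_lambda_max[OF B]
    by (auto simp: Max_gr_iff)
qed

section \<open>Weighted norms and the switched contraction estimate\<close>

lemma loewner_le_quadratic_form:
  fixes A B :: "real^'n^'n"
  assumes "loewner_le A B"
  shows "x \<bullet> (A *v x) \<le> x \<bullet> (B *v x)"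
  using assms unfolding loewner_le_def
  by (metis diff_ge_0_iff_ge inner_diff_right matrix_vector_mult_diff_rdistrib)

lemma le_sqrt_mult_if_square_le:
  fixes w c y :: real
  assumes "0 \<le> y" and "w\<^sup>2 \<le> c * y\<^sup>2"
  shows "w \<le> sqrt c * y"
proof -
  have "w \<le> sqrt (c * y\<^sup>2)" using assms(2) by (rule real_le_rsqrt)
  also have "\<dots> = sqrt c * y" using assms(1) by (simp add: real_sqrt_mult)
  finally show ?thesis .
qed

lemma sqrt_mult_le_if_square_le:
  fixes w c y :: real
  assumes "0 \<le> w" and "0 \<le> y" and "c * y\<^sup>2 \<le> w\<^sup>2"
  shows "sqrt c * y \<le> w"
proof -
  have "sqrt (c * y\<^sup>2) \<le> sqrt (w\<^sup>2)" using assms(3) by (rule real_sqrt_le_mono)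
  then show ?thesis using assms(1,2) by (simp add: real_sqrt_mult)
qed

lemma norm_mat_sqrt_mult_vec_le_lambda_max:
  fixes P Q :: "real^'n^'n"
  assumes P: "pos_def P" and Q: "sym_mat Q" and PQ: "loewner_le P Q"
  shows "norm (mat_sqrt P *v x) \<le> sqrt (lambda_max Q) * norm x"
proof (rule le_sqrt_mult_if_square_le[OF norm_ge_zero])
  have "x \<bullet> (P *v x) \<le> x \<bullet> (Q *v x)" using PQ by (rule loewner_le_quadratic_form)
  also have "\<dots> \<le> lambda_max Q * (x \<bullet> x)" using Q by (rule sym_mat_rayleigh_le_lambda_max)
  finally show "(norm (mat_sqrt P *v x))\<^sup>2 \<le> lambda_max Q * (norm x)\<^sup>2"
    unfolding norm_mat_sqrt_mult_vec_squared[OF P] by (simp add: power2_norm_eq_inner)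
qed

lemma lambda_min_le_norm_mat_sqrt_mult_vec:
  fixes P Q :: "real^'n^'n"
  assumes P: "pos_def P" and Q: "sym_mat Q" and QP: "loewner_le Q P"
  shows "sqrt (lambda_min Q) * norm x \<le> norm (mat_sqrt P *v x)"
proof (rule sqrt_mult_le_if_square_le[OF norm_ge_zero norm_ge_zero])
  have "lambda_min Q * (x \<bullet> x) \<le> x \<bullet> (Q *v x)" using Q by (rule sym_mat_lambda_min_le_rayleigh)
  also have "\<dots> \<le> x \<bullet> (P *v x)" using QP by (rule loewner_le_quadratic_form)
  finally show "lambda_min Q * (norm x)\<^sup>2 \<le> (norm (mat_sqrt P *v x))\<^sup>2"
    unfolding norm_mat_sqrt_mult_vec_squared[OF P] by (simp add: power2_norm_eq_inner)
qed

lemma norm_mat_sqrt_mult_vec_mono: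
  fixes P Q :: "real^'n^'n"
  assumes P: "pos_def P" and Q: "pos_def Q" and PQ: "loewner_le P (\<mu> *\<^sub>R Q)"
  shows "norm (mat_sqrt P *v x) \<le> sqrt \<mu> * norm (mat_sqrt Q *v x)"
proof (rule le_sqrt_mult_if_square_le[OF norm_ge_zero])
  have "x \<bullet> (P *v x) \<le> x \<bullet> ((\<mu> *\<^sub>R Q) *v x)" using PQ by (rule loewner_le_quadratic_form)
  then show "(norm (mat_sqrt P *v x))\<^sup>2 \<le> \<mu> * (norm (mat_sqrt Q *v x))\<^sup>2"
    by (simp add: norm_mat_sqrt_mult_vec_squared[OF P] norm_mat_sqrt_mult_vec_squared[OF Q]
        scaleR_matrix_vector_assoc[symmetric])
qed

lemma norm_mat_sqrt_perturbed_decay: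
  fixes P Q :: "real^'n^'n"
  assumes P: "pos_def P" and Q: "pos_def Q" and PQ: "loewner_le P Q"
    and decay: "norm (mat_sqrt P *v g) \<le> a * norm (mat_sqrt P *v x)" and d: "norm d \<le> \<delta>"
  shows "norm (mat_sqrt P *v (g + d)) \<le> a * norm (mat_sqrt P *v x) + sqrt (lambda_max Q) * \<delta>"
proof -
  have "norm (mat_sqrt P *v d) \<le> sqrt (lambda_max Q) * norm d"
    using P pos_def_imp_sym_mat[OF Q] PQ by (rule norm_mat_sqrt_mult_vec_le_lambda_max)
  also have "\<dots> \<le> sqrt (lambda_max Q) * \<delta>"
    using d pos_def_lambda_pos(2)[OF Q] by (simp add: mult_left_mono)
  finally show ?thesis
    using decay norm_triangle_ineq[of "mat_sqrt P *v g" "mat_sqrt P *v d"]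
    by (simp add: matrix_vector_right_distrib)
qed

lemma norm_mult_vec_le_spec_norm:
  fixes B :: "real^'m^'n"
  assumes "spec_norm B \<le> b" and "norm x \<le> e" and "0 \<le> b"
  shows "norm (B *v x) \<le> b * e"
proof -
  have "norm (B *v x) \<le> spec_norm B * norm x"
    unfolding spec_norm_def by (rule onorm[OF matrix_vector_mul_bounded_linear])
  also have "\<dots> \<le> b * e" using assms by (simp add: mult_mono)
  finally show ?thesis .
qed

lemma dwell_time_rate_lt_one:
  fixes T :: nat and \<alpha> \<mu> :: real
  assumes T: "0 < T" and \<alpha>: "0 < \<alpha>" "\<alpha> < 1" and \<mu>: "0 < \<mu>"
    and dwell: "real T > - ln \<mu> / ln \<alpha>"
  shows "\<alpha> * \<mu> powr (1 / real T) < 1"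
proof -
  have "ln \<alpha> < 0" using \<alpha> by simp
  with mult_strict_right_mono_neg[OF dwell this] have "real T * ln \<alpha> < - ln \<mu>" by simp
  then have "ln \<alpha> + ln \<mu> / real T < 0" using T by (simp add: field_simps)
  moreover have "\<alpha> * \<mu> powr (1 / real T) = exp (ln \<alpha> + ln \<mu> / real T)"
    using \<alpha> \<mu> by (simp add: powr_def exp_add)
  ultimately show ?thesis by simp
qed

lemma sqrt_root_weight:
  fixes \<mu> :: real and T :: nat
  assumes "0 < T" and "1 \<le> \<mu>"
  shows "1 \<le> sqrt (\<mu> powr (1 / real T))" and "sqrt (\<mu> powr (1 / real T)) ^ T = sqrt \<mu>"
  using assms by (simp_all add: ge_one_powr_ge_zero real_sqrt_power[symmetric] powr_realpow[symmetric] powr_powr)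

lemma powr_half_eq_sqrt_power:
  fixes x :: real
  assumes "0 < x"
  shows "x powr (real k / 2) = sqrt x ^ k"
  using assms by (simp add: powr_half_sqrt_powr powr_realpow real_sqrt_power)

lemma affine_recurrence_bound:
  fixes u :: "nat \<Rightarrow> real"
  assumes s: "0 \<le> s" "s < 1" and c: "0 \<le> c" and step: "\<And>k. u (Suc k) \<le> s * u k + c"
  shows "u k \<le> s ^ k * u 0 + c / (1 - s)"
proof (induction k)
  case 0
  then show ?case using s c by simp
next
  case (Suc k)
  have "u (Suc k) \<le> s * u k + c" by (rule step)
  also have "\<dots> \<le> s * (s ^ k * u 0 + c / (1 - s)) + c" using Suc s by (simp add: mult_left_mono)
  also have "\<dots> = s ^ Suc k * u 0 + c / (1 - s)" using s by (simp add: field_simps)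
  finally show ?case .
qed

lemma mem_segment_div:
  fixes k T :: nat
  assumes "0 < T"
  shows "k \<in> {k div T * T ..< k div T * T + T}"
  using dividend_less_div_times[OF assms, of k] by (simp add: add.commute)

lemma segment_disturbance_bound:
  fixes eps :: "nat \<Rightarrow> 'a::real_normed_vector" and T L :: nat
  assumes T: "0 < T" and epsbar: "0 \<le> epsbar"
    and zero: "\<And>i k. k \<in> {i*T ..< i*T + T} - {(Suc i)*T - L ..< (Suc i)*T} \<Longrightarrow> eps k = 0"
    and bound: "\<And>i k. k \<in> {(Suc i)*T - L ..< (Suc i)*T} \<Longrightarrow> norm (eps k) \<le> epsbar"
  shows "norm (eps k) \<le> epsbar"
  using mem_segment_div[OF T, of k] zero[of k "k div T"] bound[of k "k div T"] epsbar
  by (cases "k \<in> {(Suc (k div T))*T - L ..< (Suc (k div T))*T}") auto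

text \<open>\<open>V i k\<close> measures the state at time \<open>k\<close> in the norm of segment \<open>i\<close>. The weight
  \<open>\<rho> ^ (k mod T)\<close> grows by \<open>\<rho>\<close> per step within a segment and is reset at a switch, where the
  factor \<open>\<rho> ^ T\<close> it has accumulated pays for the jump of \<open>V\<close>.\<close>

lemma switched_contraction_bound:
  fixes V :: "nat \<Rightarrow> nat \<Rightarrow> real" and T :: nat
  assumes T: "0 < T" and V: "\<And>i k. 0 \<le> V i k"
    and a: "0 \<le> a" and \<rho>: "1 \<le> \<rho>" and rate: "a * \<rho> < 1" and e: "0 \<le> e"
    and switch: "\<And>i k. V (Suc i) k \<le> \<rho> ^ T * V i k"
    and step: "\<And>k. V (k div T) (Suc k) \<le> a * V (k div T) k + e"
  shows "V (k div T) k \<le> (a * \<rho>) ^ k * V 0 0 + \<rho> ^ T * e / (1 - a * \<rho>)"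
proof -
  define u where "u k = \<rho> ^ (k mod T) * V (k div T) k" for k
  have "u (Suc k) \<le> (a * \<rho>) * u k + \<rho> ^ T * e" for k
  proof (cases "Suc (k mod T) = T")
    case True
    then have "Suc k div T = Suc (k div T)" and "Suc k mod T = 0" by (simp_all add: div_Suc mod_Suc)
    then have "u (Suc k) = V (Suc (k div T)) (Suc k)" by (simp add: u_def)
    also have "\<dots> \<le> \<rho> ^ T * V (k div T) (Suc k)" by (rule switch)
    also have "\<dots> \<le> \<rho> ^ T * (a * V (k div T) k + e)" using step \<rho> by (simp add: mult_left_mono)
    also have "\<dots> = (a * \<rho>) * u k + \<rho> ^ T * e"
    proof -
      have "\<rho> ^ T = \<rho> * \<rho> ^ (k mod T)" using True by (metis power_Suc)
      then show ?thesis by (simp add: u_def algebra_simps)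
    qed
    finally show ?thesis .
  next
    case False
    then have "Suc k div T = k div T" and "Suc k mod T = Suc (k mod T)"
      by (simp_all add: div_Suc mod_Suc)
    then have "u (Suc k) = \<rho> ^ Suc (k mod T) * V (k div T) (Suc k)" by (simp add: u_def)
    also have "\<dots> \<le> \<rho> ^ Suc (k mod T) * (a * V (k div T) k + e)" using step \<rho> by (simp add: mult_left_mono)
    also have "\<dots> = (a * \<rho>) * u k + \<rho> ^ Suc (k mod T) * e" by (simp add: u_def algebra_simps)
    also have "\<dots> \<le> (a * \<rho>) * u k + \<rho> ^ T * e"
    proof -
      have "Suc (k mod T) \<le> T" using T by (simp add: Suc_leI)
      with \<rho> have "\<rho> ^ Suc (k mod T) \<le> \<rho> ^ T" by (rule power_increasing[rotated])
      with e show ?thesis by (simp add: mult_right_mono)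
    qed
    finally show ?thesis .
  qed
  then have "u k \<le> (a * \<rho>) ^ k * u 0 + \<rho> ^ T * e / (1 - a * \<rho>)"
    using a \<rho> rate e by (intro affine_recurrence_bound) auto
  moreover have "V (k div T) k \<le> u k"
    unfolding u_def using V[of "k div T" k] \<rho> by (simp add: mult_le_cancel_right1)
  ultimately show ?thesis by (simp add: u_def)
qed

lemma switched_lyapunov_iss_bound:
  fixes W :: "nat \<Rightarrow> 'a::real_normed_vector \<Rightarrow> real" and x :: "nat \<Rightarrow> 'a" and T :: nat
  assumes T: "0 < T" and a: "0 \<le> a" and \<rho>: "1 \<le> \<rho>" and rate: "a * \<rho> < 1"
    and \<delta>: "0 \<le> \<delta>" and cl: "0 < cl" and cu: "0 \<le> cu"
    and lower: "\<And>i y. cl * norm y \<le> W i y" and upper: "\<And>i y. W i y \<le> cu * norm y"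
    and switch: "\<And>i y. W (Suc i) y \<le> \<rho> ^ T * W i y"
    and step: "\<And>k. W (k div T) (x (Suc k)) \<le> a * W (k div T) (x k) + cu * \<delta>"
  shows "norm (x k) \<le> cu / cl * (a * \<rho>) ^ k * norm (x 0) + cu / cl * (\<rho> ^ T / (1 - a * \<rho>)) * \<delta>"
proof -
  have W: "0 \<le> W i y" for i y
    using order_trans[OF mult_nonneg_nonneg[OF less_imp_le[OF cl] norm_ge_zero] lower] .
  have "cl * norm (x k) \<le> W (k div T) (x k)" by (rule lower)
  also have "\<dots> \<le> (a * \<rho>) ^ k * W 0 (x 0) + \<rho> ^ T * (cu * \<delta>) / (1 - a * \<rho>)"
    using switched_contraction_bound[where V = "\<lambda>i k. W i (x k)", OF T W a \<rho> rate _ switch step]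
      cu \<delta> by simp
  also have "\<dots> \<le> (a * \<rho>) ^ k * (cu * norm (x 0)) + \<rho> ^ T * (cu * \<delta>) / (1 - a * \<rho>)"
    using upper a \<rho> by (simp add: mult_left_mono)
  also have "\<dots> = cu * ((a * \<rho>) ^ k * norm (x 0) + \<rho> ^ T / (1 - a * \<rho>) * \<delta>)"
    by (simp add: algebra_simps)
  finally have "norm (x k) \<le> cu / cl * ((a * \<rho>) ^ k * norm (x 0) + \<rho> ^ T / (1 - a * \<rho>) * \<delta>)"
    using cl by (simp add: pos_le_divide_eq mult.commute)
  then show ?thesis by (simp add: distrib_left mult.assoc)
qed

theorem theorem2:
  fixes T L_D :: nat
    and \<alpha> \<mu> Bbar epsbar \<alpha>hat :: real
    and Pmin Pmax :: "real^'n^'n"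
    and P :: "nat \<Rightarrow> real^'n^'n"
    and eta g :: "nat \<Rightarrow> real^'n"
    and B :: "nat \<Rightarrow> real^'m^'n"
    and eps :: "nat \<Rightarrow> real^'m"
  assumes T_pos: "T \<ge> 1"
    and LD: "1 \<le> L_D" "L_D \<le> T"
    and alpha: "0 < \<alpha>" "\<alpha> < 1"
    and mu: "\<mu> \<ge> 1"
    and Bbar: "Bbar \<ge> 0"
    and epsbar: "epsbar \<ge> 0"
    and dwell: "real T > - ln \<mu> / ln \<alpha>"
    and alphahat: "\<alpha>hat = \<alpha> * \<mu> powr (1 / real T)"
    and Pmin: "pos_def Pmin" and Pmax: "pos_def Pmax"
    and Ppd: "\<And>i. pos_def (P i)"
    and Pbounds: "\<And>i. loewner_le Pmin (P i) \<and> loewner_le (P i) Pmax"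
    and Pinc: "\<And>i. loewner_le (P (Suc i)) (\<mu> *\<^sub>R P i)"
    and dyn: "\<And>k. eta (Suc k) = g k + B k *v eps k"
    and Bnorm: "\<And>k. spec_norm (B k) \<le> Bbar"
    and eps_zero: "\<And>i k. k \<in> {i*T ..< i*T + T} - {(Suc i)*T - L_D ..< (Suc i)*T} \<Longrightarrow> eps k = 0"
    and eps_bound: "\<And>i k. k \<in> {(Suc i)*T - L_D ..< (Suc i)*T} \<Longrightarrow> norm (eps k) \<le> epsbar"
    and decay: "\<And>i k. k \<in> {i*T ..< i*T + T} \<Longrightarrow>
        norm (mat_sqrt (P i) *v g k) \<le> sqrt \<alpha> * norm (mat_sqrt (P i) *v eta k)"
  shows "\<forall>k. norm (eta k) \<le>
      sqrt (lambda_max Pmax / lambda_min Pmin) * \<alpha>hat powr (real k / 2) * norm (eta 0)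
      + sqrt (lambda_max Pmax / lambda_min Pmin) * ((\<alpha>hat / \<alpha>) powr (real T / 2) / (1 - sqrt \<alpha>hat))
        * Bbar * epsbar"
proof -
  define \<rho> where "\<rho> = sqrt (\<mu> powr (1 / real T))"
  let ?W = "\<lambda>i y. norm (mat_sqrt (P i) *v y)"
  have T: "0 < T" using T_pos by simp
  have "0 < \<alpha>hat" and "\<alpha>hat < 1"
    using alpha mu dwell_time_rate_lt_one[OF T alpha _ dwell] by (simp_all add: alphahat)
  have \<rho>: "1 \<le> \<rho>" and \<rho>T: "\<rho> ^ T = sqrt \<mu>" unfolding \<rho>_def using sqrt_root_weight[OF T mu] by simp_all
  have rate: "sqrt \<alpha> * \<rho> = sqrt \<alpha>hat"
    unfolding \<rho>_def alphahat using alpha by (simp add: real_sqrt_mult)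
  have lower: "sqrt (lambda_min Pmin) * norm y \<le> ?W i y" for i y
    using Ppd pos_def_imp_sym_mat[OF Pmin] Pbounds by (blast intro: lambda_min_le_norm_mat_sqrt_mult_vec)
  have upper: "?W i y \<le> sqrt (lambda_max Pmax) * norm y" for i y
    using Ppd pos_def_imp_sym_mat[OF Pmax] Pbounds by (blast intro: norm_mat_sqrt_mult_vec_le_lambda_max)
  have switch: "?W (Suc i) y \<le> \<rho> ^ T * ?W i y" for i y
    unfolding \<rho>T by (rule norm_mat_sqrt_mult_vec_mono[OF Ppd Ppd Pinc])
  have "norm (B k *v eps k) \<le> Bbar * epsbar" for k
    using Bnorm segment_disturbance_bound[OF T epsbar eps_zero eps_bound] Bbar
    by (rule norm_mult_vec_le_spec_norm)
  then have step: "?W (k div T) (eta (Suc k))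
      \<le> sqrt \<alpha> * ?W (k div T) (eta k) + sqrt (lambda_max Pmax) * (Bbar * epsbar)" for k
    unfolding dyn using Ppd Pmax Pbounds decay[OF mem_segment_div[OF T]]
    by (blast intro: norm_mat_sqrt_perturbed_decay)
  have "norm (eta k) \<le> sqrt (lambda_max Pmax) / sqrt (lambda_min Pmin) * sqrt \<alpha>hat ^ k * norm (eta 0)
      + sqrt (lambda_max Pmax) / sqrt (lambda_min Pmin) * (\<rho> ^ T / (1 - sqrt \<alpha>hat)) * (Bbar * epsbar)"
    for k
    using switched_lyapunov_iss_bound[where W = ?W and x = eta, OF T _ \<rho> _ _ _ _ lower upper switch step]
      alpha \<open>\<alpha>hat < 1\<close> Bbar epsbar pos_def_lambda_pos[OF Pmin] pos_def_lambda_pos[OF Pmax]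
    by (simp add: rate)
  moreover have "(\<alpha>hat / \<alpha>) powr (real T / 2) = \<rho> ^ T"
    unfolding \<rho>_def alphahat using alpha mu by (simp add: powr_half_eq_sqrt_power)
  ultimately show ?thesis
    using \<open>0 < \<alpha>hat\<close> by (simp add: powr_half_eq_sqrt_power real_sqrt_divide mult.assoc)
qed

end
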